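(* Let $n\ge3$ and let $N$ be the normal closure in $FVB_n$ of the subgroup $\langle(\rho_i\sigma_{i+1})^6\mid i=1,\dots,n-2\rangle$. Then $N\le\ker(\theta)\le FVP_n\cap FH_n$.
   Context: $FVB_n$ is the flat virtual braid group: generators $\sigma_1,\dots,\sigma_{n-1},\rho_1,\dots,\rho_{n-1}$, relations $\sigma_i\sigma_j=\sigma_j\sigma_i$, $\rho_i\rho_j=\rho_j\rho_i$, $\sigma_i\rho_j=\rho_j\sigma_i$ for $|i-j|\ge2$; $\sigma_i\sigma_{i+1}\sigma_i=\sigma_{i+1}\sigma_i\sigma_{i+1}$; $\rho_i\rho_{i+1}\rho_i=\rho_{i+1}\rho_i\rho_{i+1}$; $\rho_i\rho_{i+1}\sigma_i=\sigma_{i+1}\rho_i\rho_{i+1}$; $\rho_i^2=\sigma_i^2=1$. $\iota_1:FVB_n\to S_n$ sends $\sigma_i,\rho_i\mapsto(i,i+1)$; $\iota_2:FVB_n\to S_n$ sends $\sigma_i\mapsto1$, $\rho_i\mapsto(i,i+1)$; $FVP_n=\ker\iota_1$, $FH_n=\ker\iota_2$. $F_{2n}$ is free on $x_1,\dots,x_n,y_1,\dots,y_n$ and $\theta:FVB_n\to{\rm Aut}(F_{2n})$ is the homomorphism with $\theta(\sigma_i):x_i\mapsto x_{i+1}y_{i+1},\ x_{i+1}\mapsto x_iy_{i+1}^{-1}$ and $\theta(\rho_i):x_i\leftrightarrow x_{i+1},\ y_i\leftrightarrow y_{i+1}$, other generators fixed; automorphisms compose on the right, $(fg)(x)=g(f(x))$.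 *)

theory Defs
  imports Main
begin

text \<open>Since sigma_i^2 = rho_i^2 = 1
  every generator is its own inverse, so group elements are represented by positive
  words; the inverse of a word is its reversal.\<close>

datatype gen = Sig nat | Rho nat

fun gen_idx :: "gen \<Rightarrow> nat" where
  "gen_idx (Sig i) = i" | "gen_idx (Rho i) = i"

definition valid_word :: "nat \<Rightarrow> gen list \<Rightarrow> bool" where
  "valid_word n w \<longleftrightarrow> (\<forall>g\<in>set w. 1 \<le> gen_idx g \<and> gen_idx g \<le> n - 1)"

definition inv_word :: "gen list \<Rightarrow> gen list" where
  "inv_word w = rev w"

definition fvb_rels :: "nat \<Rightarrow> (gen list \<times> gen list) set" where
  "fvb_rels n =
     {([Sig i, Sig j], [Sig j, Sig i]) | i j. 1 \<le> i \<and> i \<le> n - 1 \<and> 1 \<le> j \<and> j \<le> n - 1 \<and> (i + 2 \<le> j \<or> j + 2 \<le> i)}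
   \<union> {([Rho i, Rho j], [Rho j, Rho i]) | i j. 1 \<le> i \<and> i \<le> n - 1 \<and> 1 \<le> j \<and> j \<le> n - 1 \<and> (i + 2 \<le> j \<or> j + 2 \<le> i)}
   \<union> {([Sig i, Rho j], [Rho j, Sig i]) | i j. 1 \<le> i \<and> i \<le> n - 1 \<and> 1 \<le> j \<and> j \<le> n - 1 \<and> (i + 2 \<le> j \<or> j + 2 \<le> i)}
   \<union> {([Sig i, Sig (i+1), Sig i], [Sig (i+1), Sig i, Sig (i+1)]) | i. 1 \<le> i \<and> i + 1 \<le> n - 1}
   \<union> {([Rho i, Rho (i+1), Rho i], [Rho (i+1), Rho i, Rho (i+1)]) | i. 1 \<le> i \<and> i + 1 \<le> n - 1}
   \<union> {([Rho i, Rho (i+1), Sig i], [Sig (i+1), Rho i, Rho (i+1)]) | i. 1 \<le> i \<and> i + 1 \<le> n - 1}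
   \<union> {([Rho i, Rho i], []) | i. 1 \<le> i \<and> i \<le> n - 1}
   \<union> {([Sig i, Sig i], []) | i. 1 \<le> i \<and> i \<le> n - 1}"

inductive fvb_eq :: "nat \<Rightarrow> gen list \<Rightarrow> gen list \<Rightarrow> bool" for n where
  refl: "fvb_eq n w w"
| sym: "fvb_eq n u v \<Longrightarrow> fvb_eq n v u"
| trans: "fvb_eq n u v \<Longrightarrow> fvb_eq n v w \<Longrightarrow> fvb_eq n u w"
| rel: "(l, r) \<in> fvb_rels n \<Longrightarrow> valid_word n u \<Longrightarrow> valid_word n v \<Longrightarrow>
        fvb_eq n (u @ l @ v) (u @ r @ v)"

definition rel6 :: "nat \<Rightarrow> gen list" where
  "rel6 i = concat (replicate 6 [Rho i, Sig (i+1)])"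

definition in_N :: "nat \<Rightarrow> gen list \<Rightarrow> bool" where
  "in_N n w \<longleftrightarrow> valid_word n w \<and>
     (\<exists>cs :: (gen list \<times> nat \<times> bool) list.
        (\<forall>(u, i, b) \<in> set cs. valid_word n u \<and> 1 \<le> i \<and> i \<le> n - 2) \<and>
        fvb_eq n w (concat (map (\<lambda>(u, i, b). u @ (if b then rel6 i else inv_word (rel6 i)) @ inv_word u) cs)))"

text \<open>Letters of F_{2n}: (inverted?, is_y?, index k), 1 <= k <= n;
  (False, False, k) = x_k, (False, True, k) = y_k.\<close>
type_synonym fletter = "bool \<times> bool \<times> nat"

fun finv :: "fletter \<Rightarrow> fletter" where
  "finv (e, c, k) = (\<not> e, c, k)"

fun fpush :: "fletter \<Rightarrow> fletter list \<Rightarrow> fletter list" where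
  "fpush a [] = [a]"
| "fpush a (b # bs) = (if b = finv a then bs else a # b # bs)"

definition freduce :: "fletter list \<Rightarrow> fletter list" where
  "freduce w = foldr fpush w []"

definition finv_word :: "fletter list \<Rightarrow> fletter list" where
  "finv_word w = rev (map finv w)"

definition fsubst :: "(bool \<times> nat \<Rightarrow> fletter list) \<Rightarrow> fletter list \<Rightarrow> fletter list" where
  "fsubst f w = freduce (concat (map (\<lambda>(e, c, k). if e then finv_word (f (c, k)) else f (c, k)) w))"

fun theta_gen :: "gen \<Rightarrow> bool \<times> nat \<Rightarrow> fletter list" where
  "theta_gen (Sig i) (c, k) =
     (if c = False \<and> k = i then [(False, False, i+1), (False, True, i+1)]
      else if c = False \<and> k = i + 1 then [(False, False, i), (True, True, i+1)]
      else [(False, c, k)])"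
| "theta_gen (Rho i) (c, k) =
     (if k = i then [(False, c, i+1)]
      else if k = i + 1 then [(False, c, i)]
      else [(False, c, k)])"

text \<open>Image of a free generator under theta(w); automorphisms compose on the right,
  (fg)(x) = g(f(x)), so the letters of w act from left to right.\<close>
definition theta_img :: "gen list \<Rightarrow> bool \<times> nat \<Rightarrow> fletter list" where
  "theta_img w z = foldl (\<lambda>v g. fsubst (theta_gen g) v) [(False, fst z, snd z)] w"

definition in_ker_theta :: "nat \<Rightarrow> gen list \<Rightarrow> bool" where
  "in_ker_theta n w \<longleftrightarrow>
     (\<forall>c k. 1 \<le> k \<and> k \<le> n \<longrightarrow> theta_img w (c, k) = [(False, c, k)])"

definition transp :: "nat \<Rightarrow> nat \<Rightarrow> nat" where
  "transp i = (\<lambda>m. if m = i then i + 1 else if m = i + 1 then i else m)"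

text \<open>Product of permutations, composing on the right as for automorphisms.\<close>
definition iota1 :: "gen list \<Rightarrow> nat \<Rightarrow> nat" where
  "iota1 w = foldl (\<lambda>p g. transp (gen_idx g) \<circ> p) id w"

fun iota2_gen :: "gen \<Rightarrow> nat \<Rightarrow> nat" where
  "iota2_gen (Sig i) = id"
| "iota2_gen (Rho i) = transp i"

definition iota2 :: "gen list \<Rightarrow> nat \<Rightarrow> nat" where
  "iota2 w = foldl (\<lambda>p g. iota2_gen g \<circ> p) id w"

definition in_FVP :: "nat \<Rightarrow> gen list \<Rightarrow> bool" where
  "in_FVP n w \<longleftrightarrow> iota1 w = id"

definition in_FH :: "nat \<Rightarrow> gen list \<Rightarrow> bool" where
  "in_FH n w \<longleftrightarrow> iota2 w = id"

end

theory Submission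
  imports Defs
begin

text \<open>
  Every defining relation of FVB_n and every word (rho_i sigma_(i+1))^6 only involves the
  generators with indices i, i+1, i+2, so a finite computation shows that theta respects the
  relations and sends these words to the identity; hence N lies in the kernel. To compute with
  automorphisms, elements of F_2n are represented by freely reduced words: substituting and then
  reducing is compatible with free reduction, which makes theta multiplicative on words.
  For the second inclusion, theta(w) sends y_k to y_(iota2(w)(k)) and, counting exponents of the
  x-letters, x_k to x_(iota1(w)(k)); so theta(w) = 1 forces iota1(w) = iota2(w) = 1.
\<close>

lemma finv_finv [simp]: "finv (finv a) = a"
  by (cases a) auto

fun freduced :: "fletter list \<Rightarrow> bool" where
  "freduced (a # b # w) \<longleftrightarrow> b \<noteq> finv a \<and> freduced (b # w)"
| "freduced _ \<longleftrightarrow> True"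

lemma freduced_ConsD: "freduced (a # w) \<Longrightarrow> freduced w"
  by (cases w) auto

lemma freduced_fpush: "freduced w \<Longrightarrow> freduced (fpush a w)"
  by (cases w) (auto dest: freduced_ConsD)

lemma freduced_foldr_fpush: "freduced w \<Longrightarrow> freduced (foldr fpush u w)"
  by (induction u) (auto intro: freduced_fpush)

lemma freduced_freduce: "freduced (freduce w)"
  unfolding freduce_def by (rule freduced_foldr_fpush) simp

lemma freduce_freduced: "freduced w \<Longrightarrow> freduce w = w"
proof (induction w)
  case (Cons a w)
  then have "freduce w = w" by (simp add: freduced_ConsD)
  with Cons.prems show ?case by (cases w) (auto simp: freduce_def)
qed (simp add: freduce_def)

lemma freduce_idem [simp]: "freduce (freduce w) = freduce w"
  by (rule freduce_freduced[OF freduced_freduce])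

lemma freduce_Nil [simp]: "freduce [] = []"
  by (simp add: freduce_def)

lemma freduce_Cons: "freduce (a # w) = fpush a (freduce w)"
  by (simp add: freduce_def)

lemma freduce_append: "freduce (u @ v) = foldr fpush u (freduce v)"
  by (simp add: freduce_def)

lemma fpush_fpush_finv: "freduced w \<Longrightarrow> fpush a (fpush (finv a) w) = w"
  by (cases w rule: freduced.cases) auto

lemma foldr_fpush_fpush:
  assumes "freduced w"
  shows "foldr fpush (fpush a u) w = fpush a (foldr fpush u w)"
proof (cases u)
  case (Cons b u')
  have "freduced (foldr fpush u' w)" using assms by (rule freduced_foldr_fpush)
  then show ?thesis using Cons by (auto simp: fpush_fpush_finv)
qed simp

lemma foldr_fpush_freduce: "freduced w \<Longrightarrow> foldr fpush (freduce u) w = foldr fpush u w"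
  by (induction u) (simp_all add: freduce_Cons foldr_fpush_fpush)

lemma freduce_append_freduce_left [simp]: "freduce (freduce u @ v) = freduce (u @ v)"
  by (simp add: freduce_append foldr_fpush_freduce freduced_freduce)

lemma freduce_append_freduce_right [simp]: "freduce (u @ freduce v) = freduce (u @ v)"
  by (simp add: freduce_append)

lemma finv_word_Nil [simp]: "finv_word [] = []"
  and finv_word_Cons [simp]: "finv_word (a # w) = finv_word w @ [finv a]"
  and finv_word_append [simp]: "finv_word (u @ v) = finv_word v @ finv_word u"
  and finv_word_finv_word [simp]: "finv_word (finv_word w) = w"
  by (simp_all add: finv_word_def rev_map comp_def)

lemma freduce_append_finv_word [simp]: "freduce (w @ finv_word w) = []"
proof (induction w)
  case (Cons a w)
  have "freduce (w @ finv_word w @ [finv a]) = freduce [finv a]"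
    using freduce_append_freduce_left[of "w @ finv_word w" "[finv a]"] Cons.IH by simp
  then show ?case by (simp add: freduce_Cons)
qed simp

lemma freduce_finv_word_append [simp]: "freduce (finv_word w @ w) = []"
  using freduce_append_finv_word[of "finv_word w"] by simp

lemma freduce_finv_word_freduce: "freduce (finv_word (freduce w)) = freduce (finv_word w)"
proof -
  let ?r = "freduce w"
  have "freduce (finv_word ?r) = freduce (freduce (finv_word w @ w) @ finv_word ?r)"
    by (simp only: freduce_finv_word_append append_Nil)
  also have "\<dots> = freduce (freduce (finv_word w @ ?r) @ finv_word ?r)"
    by (simp only: freduce_append_freduce_right)
  also have "\<dots> = freduce (finv_word w @ freduce (?r @ finv_word ?r))"
    by (simp only: append_assoc freduce_append_freduce_left[of "finv_word w @ ?r"]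
        freduce_append_freduce_right[of "finv_word w" "?r @ finv_word ?r"])
  also have "\<dots> = freduce (finv_word w)"
    by (simp only: freduce_append_finv_word append_Nil2)
  finally show ?thesis .
qed

fun fimg :: "(bool \<times> nat \<Rightarrow> fletter list) \<Rightarrow> fletter \<Rightarrow> fletter list" where
  "fimg f (e, c, k) = (if e then finv_word (f (c, k)) else f (c, k))"

definition fexpand :: "(bool \<times> nat \<Rightarrow> fletter list) \<Rightarrow> fletter list \<Rightarrow> fletter list" where
  "fexpand f w = concat (map (fimg f) w)"

lemma fsubst_eq_freduce_fexpand: "fsubst f w = freduce (fexpand f w)"
proof -
  have "(\<lambda>(e, c, k). if e then finv_word (f (c, k)) else f (c, k)) = fimg f"
    by (auto simp: fun_eq_iff)
  then show ?thesis by (simp add: fsubst_def fexpand_def)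
qed

lemma fexpand_Nil [simp]: "fexpand f [] = []"
  and fexpand_Cons [simp]: "fexpand f (a # w) = fimg f a @ fexpand f w"
  and fexpand_append [simp]: "fexpand f (u @ v) = fexpand f u @ fexpand f v"
  by (simp_all add: fexpand_def)

lemma fimg_finv [simp]: "fimg f (finv a) = finv_word (fimg f a)"
  by (cases a) auto

lemma fexpand_finv_word [simp]: "fexpand f (finv_word w) = finv_word (fexpand f w)"
  by (induction w) auto

lemma fexpand_fexpand: "fexpand f (fexpand g w) = fexpand (\<lambda>z. fexpand f (g z)) w"
proof (induction w)
  case (Cons a w)
  then show ?case by (cases a) auto
qed simp

lemma fexpand_var: "fexpand (\<lambda>z. [(False, z)]) w = w"
proof (induction w)
  case (Cons a w)
  then show ?case by (cases a) auto
qed simp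

lemma freduce_fexpand_fpush: "freduce (fexpand f (fpush a w)) = freduce (fexpand f (a # w))"
proof (cases w)
  case (Cons b w')
  have "freduce (fimg f a @ finv_word (fimg f a) @ fexpand f w') = freduce (fexpand f w')"
    using freduce_append_freduce_left[of "fimg f a @ finv_word (fimg f a)" "fexpand f w'"]
    by simp
  with Cons show ?thesis by auto
qed simp

lemma freduce_fexpand_freduce: "freduce (fexpand f (freduce w)) = freduce (fexpand f w)"
proof (induction w)
  case (Cons a w)
  have "freduce (fexpand f (freduce (a # w)))
      = freduce (fimg f a @ freduce (fexpand f (freduce w)))"
    by (simp add: freduce_Cons freduce_fexpand_fpush)
  also have "\<dots> = freduce (fexpand f (a # w))"
    by (simp add: Cons.IH)
  finally show ?case .
qed simp

lemma freduce_fexpand_cong: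
  assumes "\<And>z. freduce (f z) = freduce (g z)"
  shows "freduce (fexpand f w) = freduce (fexpand g w)"
proof (induction w)
  case (Cons a w)
  obtain e c k where a: "a = (e, c, k)" by (cases a)
  have "freduce (fimg f a) = freduce (fimg g a)"
    using assms[of "(c, k)"] freduce_finv_word_freduce[of "f (c, k)"]
      freduce_finv_word_freduce[of "g (c, k)"]
    by (simp add: a)
  then have "freduce (freduce (fimg f a) @ freduce (fexpand f w))
      = freduce (freduce (fimg g a) @ freduce (fexpand g w))"
    using Cons.IH by simp
  then show ?case by simp
qed simp

lemma fsubst_fsubst: "fsubst f (fsubst g w) = fsubst (\<lambda>z. fsubst f (g z)) w"
proof -
  have "fsubst f (fsubst g w) = freduce (fexpand (\<lambda>z. fexpand f (g z)) w)"
    by (simp add: fsubst_eq_freduce_fexpand freduce_fexpand_freduce fexpand_fexpand)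
  also have "\<dots> = fsubst (\<lambda>z. fsubst f (g z)) w"
    unfolding fsubst_eq_freduce_fexpand by (rule freduce_fexpand_cong) simp
  finally show ?thesis .
qed

lemma fsubst_var: "freduced w \<Longrightarrow> fsubst (\<lambda>z. [(False, z)]) w = w"
  by (simp add: fsubst_eq_freduce_fexpand fexpand_var freduce_freduced)

lemma theta_img_Nil: "theta_img [] = (\<lambda>z. [(False, z)])"
  by (simp add: theta_img_def fun_eq_iff)

lemma theta_img_snoc: "theta_img (w @ [g]) z = fsubst (theta_gen g) (theta_img w z)"
  by (simp add: theta_img_def)

lemma freduced_theta_img: "freduced (theta_img w z)"
  by (cases w rule: rev_cases)
    (simp_all add: theta_img_Nil theta_img_snoc fsubst_def freduced_freduce)

lemma theta_img_append: "theta_img (u @ v) z = fsubst (theta_img v) (theta_img u z)"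
proof (induction v rule: rev_induct)
  case Nil
  then show ?case
    by (simp add: theta_img_Nil fsubst_var freduced_theta_img)
next
  case (snoc g v)
  then show ?case
    by (simp add: theta_img_snoc fsubst_fsubst flip: append_assoc)
qed

lemma theta_img_append_cong:
  assumes "theta_img u = theta_img v"
  shows "theta_img (l @ u @ r) = theta_img (l @ v @ r)"
proof -
  have "theta_img (u @ r) = theta_img (v @ r)"
    using assms by (simp add: fun_eq_iff theta_img_append)
  then show ?thesis by (simp only: theta_img_append[of l, abs_def])
qed

lemmas theta_img_eval_simps = theta_img_def fsubst_def freduce_def finv_word_def

lemma theta_img_square: "theta_img [g, g] = theta_img []"
  by (cases g) (auto simp: fun_eq_iff theta_img_eval_simps)

lemma theta_img_commute:
  assumes "gen_idx g + 2 \<le> gen_idx h \<or> gen_idx h + 2 \<le> gen_idx g"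
  shows "theta_img [g, h] = theta_img [h, g]"
  using assms by (cases g; cases h) (auto simp: fun_eq_iff theta_img_eval_simps)

lemma theta_img_braid:
  "theta_img [Sig i, Sig (i+1), Sig i] = theta_img [Sig (i+1), Sig i, Sig (i+1)]"
  "theta_img [Rho i, Rho (i+1), Rho i] = theta_img [Rho (i+1), Rho i, Rho (i+1)]"
  "theta_img [Rho i, Rho (i+1), Sig i] = theta_img [Sig (i+1), Rho i, Rho (i+1)]"
  by (auto simp: fun_eq_iff theta_img_eval_simps)

lemma theta_img_rel6: "theta_img (rel6 i) = theta_img []"
  by (auto simp: fun_eq_iff rel6_def numeral_eq_Suc theta_img_eval_simps)

lemma theta_img_fvb_rel: "(l, r) \<in> fvb_rels n \<Longrightarrow> theta_img l = theta_img r"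
  unfolding fvb_rels_def
  by (auto intro: theta_img_commute theta_img_square simp: theta_img_braid[simplified])

lemma fvb_eq_theta_img: "fvb_eq n u v \<Longrightarrow> theta_img u = theta_img v"
  by (induction rule: fvb_eq.induct) (auto intro: theta_img_append_cong theta_img_fvb_rel)

lemma theta_img_append_rev: "theta_img (u @ rev u) = theta_img []"
proof (induction u)
  case (Cons g u)
  have "theta_img ((g # u) @ rev (g # u)) = theta_img ([g] @ (u @ rev u) @ [g])"
    by simp
  also have "\<dots> = theta_img ([g] @ [] @ [g])"
    using Cons.IH by (rule theta_img_append_cong)
  finally show ?case by (simp add: theta_img_square)
qed simp

lemma theta_img_rev_trivial:
  assumes "theta_img w = theta_img []"
  shows "theta_img (rev w) = theta_img []"
proof -
  have "theta_img (rev w @ [] @ []) = theta_img (rev w @ w @ [])"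
    using assms[symmetric] by (rule theta_img_append_cong)
  then show ?thesis using theta_img_append_rev[of "rev w"] by simp
qed

lemma theta_img_conj_trivial:
  assumes "theta_img w = theta_img []"
  shows "theta_img (u @ w @ rev u) = theta_img []"
  using theta_img_append_cong[OF assms, of u "rev u"] theta_img_append_rev[of u] by simp

lemma theta_img_concat_trivial:
  "(\<And>w. w \<in> set ws \<Longrightarrow> theta_img w = theta_img []) \<Longrightarrow>
    theta_img (concat ws) = theta_img []"
proof (induction ws)
  case (Cons w ws)
  then have "theta_img ([] @ w @ concat ws) = theta_img ([] @ [] @ concat ws)"
    by (intro theta_img_append_cong) simp
  with Cons show ?case by simp
qed simp

lemma in_ker_thetaI: "theta_img w = theta_img [] \<Longrightarrow> in_ker_theta n w"
  by (simp add: in_ker_theta_def theta_img_Nil)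

lemma in_N_imp_in_ker_theta:
  assumes "in_N n w"
  shows "in_ker_theta n w"
proof -
  let ?conj = "\<lambda>(u, i, b). u @ (if b then rel6 i else inv_word (rel6 i)) @ inv_word u"
  obtain cs where "fvb_eq n w (concat (map ?conj cs))"
    using assms unfolding in_N_def by blast
  then have "theta_img w = theta_img (concat (map ?conj cs))"
    by (rule fvb_eq_theta_img)
  also have "\<dots> = theta_img []"
  proof (rule theta_img_concat_trivial)
    fix v assume "v \<in> set (map ?conj cs)"
    then obtain u i b where "v = ?conj (u, i, b)" by auto
    moreover have "theta_img (if b then rel6 i else inv_word (rel6 i)) = theta_img []"
      using theta_img_rel6 theta_img_rev_trivial[OF theta_img_rel6] by (simp add: inv_word_def)
    ultimately show "theta_img v = theta_img []"
      using theta_img_conj_trivial by (simp add: inv_word_def)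
  qed
  finally show ?thesis by (rule in_ker_thetaI)
qed

fun x_exponent :: "nat \<Rightarrow> fletter \<Rightarrow> int" where
  "x_exponent m (e, c, k) = (if \<not> c \<and> k = m then (if e then -1 else 1) else 0)"

definition x_exponent_sum :: "nat \<Rightarrow> fletter list \<Rightarrow> int" where
  "x_exponent_sum m w = sum_list (map (x_exponent m) w)"

lemma x_exponent_sum_Nil [simp]: "x_exponent_sum m [] = 0"
  and x_exponent_sum_Cons [simp]: "x_exponent_sum m (a # w) = x_exponent m a + x_exponent_sum m w"
  and x_exponent_sum_append [simp]:
    "x_exponent_sum m (u @ v) = x_exponent_sum m u + x_exponent_sum m v"
  by (simp_all add: x_exponent_sum_def)

lemma x_exponent_finv [simp]: "x_exponent m (finv a) = - x_exponent m a"
  by (cases a) auto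

lemma x_exponent_sum_finv_word [simp]: "x_exponent_sum m (finv_word w) = - x_exponent_sum m w"
  by (induction w) auto

lemma x_exponent_sum_freduce [simp]: "x_exponent_sum m (freduce w) = x_exponent_sum m w"
proof (induction w)
  case (Cons a w)
  then show ?case by (cases "freduce w") (auto simp: freduce_Cons)
qed simp

lemma x_exponent_sum_fexpand:
  assumes "\<And>k. x_exponent_sum m (f (False, k)) = x_exponent m' (False, False, k)"
    and "\<And>k. x_exponent_sum m (f (True, k)) = 0"
  shows "x_exponent_sum m (fexpand f w) = x_exponent_sum m' w"
proof (induction w)
  case (Cons a w)
  obtain e c k where "a = (e, c, k)" by (cases a)
  with Cons.IH show ?case using assms[of k] by (cases c) auto
qed simp

lemma transp_eq_iff: "transp i m = k \<longleftrightarrow> m = transp i k"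
  by (auto simp: transp_def)

lemma x_exponent_sum_theta_gen:
  "x_exponent_sum m (theta_gen g (False, k)) = x_exponent (transp (gen_idx g) m) (False, False, k)"
  "x_exponent_sum m (theta_gen g (True, k)) = 0"
  by (cases g; auto simp: transp_def)+

lemma x_exponent_sum_theta_img:
  "x_exponent_sum m (theta_img w (False, k)) = (if m = iota1 w k then 1 else 0)"
proof (induction w arbitrary: m rule: rev_induct)
  case (snoc g w)
  let ?t = "transp (gen_idx g)"
  have "x_exponent_sum m (theta_img (w @ [g]) (False, k))
      = x_exponent_sum (?t m) (theta_img w (False, k))"
    by (simp add: theta_img_snoc fsubst_eq_freduce_fexpand x_exponent_sum_fexpand
        x_exponent_sum_theta_gen)
  also have "\<dots> = (if m = ?t (iota1 w k) then 1 else 0)"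
    by (simp add: snoc.IH transp_eq_iff)
  finally show ?case by (simp add: iota1_def)
qed (simp add: theta_img_Nil iota1_def)

lemma theta_img_y: "theta_img w (True, k) = [(False, True, iota2 w k)]"
proof (induction w rule: rev_induct)
  case (snoc g w)
  then show ?case
    by (cases g)
      (simp_all add: theta_img_snoc iota2_def fsubst_def freduce_def finv_word_def transp_def)
qed (simp add: theta_img_Nil iota2_def)

lemma iota2_gen_apply: "iota2_gen g = (case g of Sig i \<Rightarrow> id | Rho i \<Rightarrow> transp i)"
  by (cases g) simp_all

lemma
  assumes "valid_word n w" and "k = 0 \<or> n < k"
  shows iota1_outside: "iota1 w k = k" and iota2_outside: "iota2 w k = k"
  using assms
  by (induction w rule: rev_induct)
    (auto simp: iota1_def iota2_def valid_word_def transp_def iota2_gen_apply split: gen.split)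

lemma in_ker_theta_imp_in_FVP_FH:
  assumes "valid_word n w" and "in_ker_theta n w"
  shows "in_FVP n w \<and> in_FH n w"
proof -
  have "iota1 w k = k \<and> iota2 w k = k" for k
  proof (cases "1 \<le> k \<and> k \<le> n")
    case True
    then have x: "theta_img w (False, k) = [(False, False, k)]"
      and y: "theta_img w (True, k) = [(False, True, k)]"
      using assms(2) unfolding in_ker_theta_def by simp_all
    from x have "x_exponent_sum k (theta_img w (False, k)) = 1" by simp
    then have "iota1 w k = k" by (simp add: x_exponent_sum_theta_img split: if_splits)
    moreover from y have "iota2 w k = k" by (simp add: theta_img_y)
    ultimately show ?thesis ..
  next
    case False
    then show ?thesis using assms(1) iota1_outside iota2_outside by auto
  qed
  then show ?thesis by (simp add: in_FVP_def in_FH_def fun_eq_iff)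
qed

theorem corollary1:
  fixes n :: nat
  assumes "n \<ge> 3"
  shows "(\<forall>w. in_N n w \<longrightarrow> in_ker_theta n w) \<and>
         (\<forall>w. valid_word n w \<and> in_ker_theta n w \<longrightarrow> in_FVP n w \<and> in_FH n w)"
  using in_N_imp_in_ker_theta in_ker_theta_imp_in_FVP_FH by blast

end
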